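(* Let $K$ be a positive semidefinite kernel, let $(\mathbf{x}_i,y_i)$, $i=1,\dots,N$ with $N=n+mL$, be the augmented MU-SVM data set with costs $C_i>0$ and margins $e_{il}$ (defined in the context), and let $\boldsymbol\alpha=(\alpha_{il})$ be an optimal solution of the dual problem $$\max_{\boldsymbol\alpha}\ -\tfrac12\sum_{i,j}\sum_l\alpha_{il}\alpha_{jl}K(\mathbf{x}_i,\mathbf{x}_j)-\sum_{i,l}\alpha_{il}e_{il}\quad\text{s.t.}\quad\sum_l\alpha_{il}=0\ \forall i;\ \ \alpha_{il}\le C_i\text{ if }l=y_i;\ \ \alpha_{il}\le0\text{ if }l\ne y_i.$$ Let $SV_1=\{i: 0<\alpha_{iy_i}<C_i\}$. Then for every $i\in SV_1$: (i) $\sum_{k=1}^L\alpha_{ik}\big[\sum_j\alpha_{jk}K(\mathbf{x}_i,\mathbf{x}_j)+e_{ik}\big]=0$; (ii) for every $k\ne y_i$ with $\alpha_{ik}<0$ (strictly), $\sum_j\alpha_{jk}K(\mathbf{x}_i,\mathbf{x}_j)+e_{ik}=\sum_j\alpha_{jy_i}K(\mathbf{x}_i,\mathbf{x}_j)+e_{iy_i}$; (iii) for every $\boldsymbol\gamma_i=(\gamma_{i1},\dots,\gamma_{iL})$ with $\sum_k\gamma_{ik}=0$ and $\gamma_{ik}=0$ whenever $\alpha_{ik}=0$, one has $\sum_k\gamma_{ik}\big[\sum_j\alpha_{jk}K(\mathbf{x}_i,\mathbf{x}_j)+e_{ik}\big]=0$.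
   Context: Training samples $(\mathbf{x}_i,y_i)$, $i=1,\dots,n$, $y_i\in\{1,\dots,L\}$, have $C_i=C$ and $e_{il}=1-\delta_{il}$. Each universum sample $\mathbf{x}^*_{i'}$, $i'=1,\dots,m$, is replicated $L$ times: for $k=1,\dots,L$ the index $i=n+(i'-1)L+k$ carries $(\mathbf{x}_i,y_i)=(\mathbf{x}^*_{i'},k)$, $C_i=C^*$ and $e_{il}=-\Delta(1-\delta_{il})$, with $\Delta\ge0$. Here $\delta_{il}=1$ if $y_i=l$, else $0$. This dual is the dual of the primal $\min\frac12\sum_l\|\mathbf{w}_l\|^2+\sum_iC_i\xi_i$ s.t. $(\mathbf{w}_{y_i}-\mathbf{w}_l)^\top\phi(\mathbf{x}_i)\ge e_{il}-\xi_i$, with $\mathbf{w}_l=\sum_i\alpha_{il}\phi(\mathbf{x}_i)$, where $\phi$ is the feature map of $K$. *)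

theory Defs
  imports Complex_Main
begin

definition psd_kernel :: "('a \<Rightarrow> 'a \<Rightarrow> real) \<Rightarrow> bool" where
  "psd_kernel K \<longleftrightarrow> (\<forall>x y. K x y = K y x) \<and>
     (\<forall>(p::nat) (c::nat \<Rightarrow> real) (z::nat \<Rightarrow> 'a).
        0 \<le> (\<Sum>i<p. \<Sum>j<p. c i * c j * K (z i) (z j)))"

text \<open>Augmented MU-SVM data set (indices i = 1..n+m*L, classes 1..L).
  For i > n, i = n + (i'-1)*L + k with 1 \<le> k \<le> L.\<close>
definition aug_x :: "nat \<Rightarrow> nat \<Rightarrow> (nat \<Rightarrow> 'a) \<Rightarrow> (nat \<Rightarrow> 'a) \<Rightarrow> nat \<Rightarrow> 'a" where
  "aug_x n L xs xu i = (if i \<le> n then xs i else xu ((i - n - 1) div L + 1))"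

definition aug_y :: "nat \<Rightarrow> nat \<Rightarrow> (nat \<Rightarrow> nat) \<Rightarrow> nat \<Rightarrow> nat" where
  "aug_y n L ys i = (if i \<le> n then ys i else (i - n - 1) mod L + 1)"

definition aug_C :: "nat \<Rightarrow> real \<Rightarrow> real \<Rightarrow> nat \<Rightarrow> real" where
  "aug_C n C Cs i = (if i \<le> n then C else Cs)"

definition kdelta :: "nat \<Rightarrow> nat \<Rightarrow> real" where
  "kdelta a b = (if a = b then 1 else 0)"

definition aug_e :: "nat \<Rightarrow> nat \<Rightarrow> real \<Rightarrow> (nat \<Rightarrow> nat) \<Rightarrow> nat \<Rightarrow> nat \<Rightarrow> real" where
  "aug_e n L \<Delta> ys i l =
     (if i \<le> n then 1 - kdelta (aug_y n L ys i) l
      else - \<Delta> * (1 - kdelta (aug_y n L ys i) l))"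

definition dual_obj :: "('a \<Rightarrow> 'a \<Rightarrow> real) \<Rightarrow> (nat \<Rightarrow> 'a) \<Rightarrow> (nat \<Rightarrow> nat \<Rightarrow> real)
     \<Rightarrow> nat \<Rightarrow> nat \<Rightarrow> (nat \<Rightarrow> nat \<Rightarrow> real) \<Rightarrow> real" where
  "dual_obj K X E N L \<alpha> =
     - (1/2) * (\<Sum>i\<in>{1..N}. \<Sum>j\<in>{1..N}. \<Sum>l\<in>{1..L}. \<alpha> i l * \<alpha> j l * K (X i) (X j))
     - (\<Sum>i\<in>{1..N}. \<Sum>l\<in>{1..L}. \<alpha> i l * E i l)"

definition dual_feasible :: "(nat \<Rightarrow> nat) \<Rightarrow> (nat \<Rightarrow> real) \<Rightarrow> nat \<Rightarrow> nat
     \<Rightarrow> (nat \<Rightarrow> nat \<Rightarrow> real) \<Rightarrow> bool" where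
  "dual_feasible Y Cf N L \<alpha> \<longleftrightarrow>
     (\<forall>i\<in>{1..N}. (\<Sum>l\<in>{1..L}. \<alpha> i l) = 0 \<and>
        (\<forall>l\<in>{1..L}. (l = Y i \<longrightarrow> \<alpha> i l \<le> Cf i) \<and> (l \<noteq> Y i \<longrightarrow> \<alpha> i l \<le> 0)))"

definition grad :: "('a \<Rightarrow> 'a \<Rightarrow> real) \<Rightarrow> (nat \<Rightarrow> 'a) \<Rightarrow> (nat \<Rightarrow> nat \<Rightarrow> real)
     \<Rightarrow> nat \<Rightarrow> (nat \<Rightarrow> nat \<Rightarrow> real) \<Rightarrow> nat \<Rightarrow> nat \<Rightarrow> real" where
  "grad K X E N \<alpha> i k = (\<Sum>j\<in>{1..N}. \<alpha> j k * K (X i) (X j)) + E i k"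

end

theory Submission
  imports Defs
begin

text \<open>Fix a support vector \<open>i \<in> SV\<^sub>1\<close>. Moving row \<open>i\<close> of \<open>\<alpha>\<close> to \<open>\<alpha>\<^sub>i + t \<gamma>\<close>, where \<open>\<gamma>\<close> sums to zero
  and vanishes wherever \<open>\<alpha>\<^sub>i\<close> does, keeps the dual feasible for all small \<open>|t|\<close> of either
  sign: every constraint touched by \<open>\<gamma>\<close> is slack, the upper one \<open>\<alpha>\<^sub>i\<^sub>y\<^sub>i < C\<^sub>i\<close> by
  assumption and the others because \<open>\<alpha>\<^sub>i\<^sub>k < 0\<close> wherever \<open>\<alpha>\<^sub>i\<^sub>k \<noteq> 0\<close>. Along this line the
  objective is a quadratic in \<open>t\<close> with linear coefficient \<open>-\<Sum>\<^sub>k \<gamma>\<^sub>k grad\<^sub>i\<^sub>k\<close>, and a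
  maximum at \<open>t = 0\<close> forces it to vanish; this is (iii). Then (i) is the choice
  \<open>\<gamma> = \<alpha>\<^sub>i\<close>, and (ii) is \<open>\<gamma> = e\<^sub>k - e\<^sub>y\<^sub>i\<close>, admissible because \<open>\<alpha>\<^sub>i\<^sub>y\<^sub>i > 0\<close>.\<close>

lemma linear_coeff_eq_0_if_eventually_quadratic_nonpos:
  fixes a b :: real
  assumes "\<forall>\<^sub>F t in at 0. t * a + t\<^sup>2 * b \<le> 0"
  shows "a = 0"
proof -
  have lim: "((\<lambda>t. a + t * b) \<longlongrightarrow> a) (at 0 within A)" for A
    by (auto intro!: tendsto_eq_intros)
  have right: "\<forall>\<^sub>F t in at_right 0. a + t * b \<le> 0"
  proof (rule eventually_mono[OF eventually_conj])
    show "\<forall>\<^sub>F t in at_right 0. t * a + t\<^sup>2 * b \<le> 0"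
      using assms by (simp add: eventually_at_split)
    show "\<forall>\<^sub>F t in at_right 0. (0::real) < t"
      by (rule eventually_at_right_less)
    fix t :: real
    assume "t * a + t\<^sup>2 * b \<le> 0 \<and> 0 < t"
    then have "t * (a + t * b) \<le> 0 \<and> 0 < t"
      by (simp add: power2_eq_square algebra_simps)
    then show "a + t * b \<le> 0"
      by (auto simp: mult_le_0_iff)
  qed
  have left: "\<forall>\<^sub>F t in at_left 0. a + t * b \<ge> 0"
  proof (rule eventually_mono[OF eventually_conj])
    show "\<forall>\<^sub>F t in at_left 0. t * a + t\<^sup>2 * b \<le> 0"
      using assms by (simp add: eventually_at_split)
    show "\<forall>\<^sub>F t in at_left 0. t < (0::real)"
      by (simp add: eventually_at_filter)
    fix t :: real
    assume "t * a + t\<^sup>2 * b \<le> 0 \<and> t < 0"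
    then have "t * (a + t * b) \<le> 0 \<and> t < 0"
      by (simp add: power2_eq_square algebra_simps)
    then show "a + t * b \<ge> 0"
      by (auto simp: mult_le_0_iff)
  qed
  have "a \<le> 0"
    using tendsto_upperbound[OF lim right] by simp
  moreover have "a \<ge> 0"
    using tendsto_lowerbound[OF lim left] by simp
  ultimately show ?thesis by simp
qed

lemma eventually_add_scaled_le:
  fixes x g b :: real
  assumes "x < b \<or> x \<le> b \<and> g = 0"
  shows "\<forall>\<^sub>F t in at 0. x + t * g \<le> b"
proof (cases "x < b")
  case True
  have "((\<lambda>t. x + t * g) \<longlongrightarrow> x) (at 0)"
    by (auto intro!: tendsto_eq_intros)
  then have "\<forall>\<^sub>F t in at 0. x + t * g < b"
    using True by (rule order_tendstoD)
  then show ?thesis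
    by (rule eventually_mono) simp
next
  case False
  then show ?thesis
    using assms by simp
qed

definition gram_form :: "('a \<Rightarrow> 'a \<Rightarrow> real) \<Rightarrow> (nat \<Rightarrow> 'a) \<Rightarrow> nat \<Rightarrow> nat
     \<Rightarrow> (nat \<Rightarrow> nat \<Rightarrow> real) \<Rightarrow> (nat \<Rightarrow> nat \<Rightarrow> real) \<Rightarrow> real" where
  "gram_form K X N L u v = (\<Sum>j\<in>{1..N}. \<Sum>j'\<in>{1..N}. \<Sum>l\<in>{1..L}. u j l * v j' l * K (X j) (X j'))"

definition single_row :: "nat \<Rightarrow> (nat \<Rightarrow> real) \<Rightarrow> nat \<Rightarrow> nat \<Rightarrow> real" where
  "single_row i \<gamma> j l = (if j = i then \<gamma> l else 0)"

lemma dual_obj_eq_gram_form: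
  "dual_obj K X E N L \<alpha> =
     - (1/2) * gram_form K X N L \<alpha> \<alpha> - (\<Sum>j\<in>{1..N}. \<Sum>l\<in>{1..L}. \<alpha> j l * E j l)"
  by (simp add: dual_obj_def gram_form_def)

lemma gram_form_add_scaled:
  "gram_form K X N L (\<lambda>j l. u j l + t * g j l) (\<lambda>j l. u j l + t * g j l) =
     gram_form K X N L u u + t * gram_form K X N L g u + t * gram_form K X N L u g
     + t\<^sup>2 * gram_form K X N L g g"
proof -
  have "(u j l + t * g j l) * (u j' l + t * g j' l) * k =
     u j l * u j' l * k + t * (g j l * u j' l * k) + t * (u j l * g j' l * k) + t\<^sup>2 * (g j l * g j' l * k)"
    for j j' l k
    by (simp add: algebra_simps power2_eq_square)
  then show ?thesis
    unfolding gram_form_def by (simp add: sum.distrib sum_distrib_left)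
qed

lemma gram_form_commute:
  assumes "\<forall>x y. K x y = K y x"
  shows "gram_form K X N L u v = gram_form K X N L v u"
proof -
  have "gram_form K X N L v u = (\<Sum>j'\<in>{1..N}. \<Sum>j\<in>{1..N}. \<Sum>l\<in>{1..L}. v j l * u j' l * K (X j) (X j'))"
    unfolding gram_form_def by (rule sum.swap)
  also have "\<dots> = gram_form K X N L u v"
    unfolding gram_form_def using assms by (intro sum.cong refl) (simp add: mult_ac)
  finally show ?thesis by simp
qed

lemma sum_single_row:
  assumes "i \<in> {1..N}"
  shows "(\<Sum>j\<in>{1..N}. single_row i \<gamma> j l * f j) = \<gamma> l * f i"
proof -
  have "(\<Sum>j\<in>{1..N}. single_row i \<gamma> j l * f j) = (\<Sum>j\<in>{1..N}. if j = i then \<gamma> l * f i else 0)"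
    by (intro sum.cong) (auto simp: single_row_def)
  then show ?thesis
    using assms by simp
qed

lemma gram_form_single_row:
  assumes "i \<in> {1..N}"
  shows "gram_form K X N L (single_row i \<gamma>) v = (\<Sum>l\<in>{1..L}. \<gamma> l * (\<Sum>j\<in>{1..N}. v j l * K (X i) (X j)))"
proof -
  have "gram_form K X N L (single_row i \<gamma>) v =
      (\<Sum>j\<in>{1..N}. \<Sum>l\<in>{1..L}. \<Sum>j'\<in>{1..N}. single_row i \<gamma> j l * (v j' l * K (X j) (X j')))"
    unfolding gram_form_def mult.assoc by (intro sum.cong refl sum.swap)
  also have "\<dots> = (\<Sum>l\<in>{1..L}. \<Sum>j\<in>{1..N}. single_row i \<gamma> j l * (\<Sum>j'\<in>{1..N}. v j' l * K (X j) (X j')))"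
    by (subst sum.swap) (simp add: sum_distrib_left)
  also have "\<dots> = (\<Sum>l\<in>{1..L}. \<gamma> l * (\<Sum>j\<in>{1..N}. v j l * K (X i) (X j)))"
    by (simp only: sum_single_row[OF assms])
  finally show ?thesis .
qed

lemma dual_obj_add_single_row:
  assumes sym: "\<forall>x y. K x y = K y x" and i: "i \<in> {1..N}"
  shows "dual_obj K X E N L (\<lambda>j l. \<alpha> j l + t * single_row i \<gamma> j l) =
    dual_obj K X E N L \<alpha> - t * (\<Sum>l\<in>{1..L}. \<gamma> l * grad K X E N \<alpha> i l)
      - t\<^sup>2 / 2 * (\<Sum>l\<in>{1..L}. (\<gamma> l)\<^sup>2 * K (X i) (X i))"
proof -
  let ?G = "single_row i \<gamma>"
  have cross: "gram_form K X N L ?G \<alpha> = (\<Sum>l\<in>{1..L}. \<gamma> l * (\<Sum>j\<in>{1..N}. \<alpha> j l * K (X i) (X j)))"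
    using i by (rule gram_form_single_row)
  have square: "gram_form K X N L ?G ?G = (\<Sum>l\<in>{1..L}. (\<gamma> l)\<^sup>2 * K (X i) (X i))"
    by (simp only: gram_form_single_row[OF i] sum_single_row[OF i] power2_eq_square mult.assoc)
  have linear: "(\<Sum>j\<in>{1..N}. \<Sum>l\<in>{1..L}. (\<alpha> j l + t * ?G j l) * E j l) =
      (\<Sum>j\<in>{1..N}. \<Sum>l\<in>{1..L}. \<alpha> j l * E j l) + t * (\<Sum>l\<in>{1..L}. \<gamma> l * E i l)"
  proof -
    have "(\<Sum>j\<in>{1..N}. \<Sum>l\<in>{1..L}. ?G j l * E j l) = (\<Sum>l\<in>{1..L}. \<gamma> l * E i l)"
      by (subst sum.swap) (simp only: sum_single_row[OF i])
    then show ?thesis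
      by (simp add: distrib_right sum.distrib mult.assoc flip: sum_distrib_left)
  qed
  have "(\<Sum>l\<in>{1..L}. \<gamma> l * grad K X E N \<alpha> i l) =
      (\<Sum>l\<in>{1..L}. \<gamma> l * (\<Sum>j\<in>{1..N}. \<alpha> j l * K (X i) (X j))) + (\<Sum>l\<in>{1..L}. \<gamma> l * E i l)"
    unfolding grad_def by (simp add: distrib_left sum.distrib)
  then show ?thesis
    unfolding dual_obj_eq_gram_form gram_form_add_scaled gram_form_commute[OF sym, of X N L \<alpha> ?G]
      cross square linear
    by (simp add: algebra_simps)
qed

lemma dual_feasible_add_single_row:
  assumes feas: "dual_feasible Y Cf N L \<alpha>" and i: "i \<in> {1..N}" and slack: "\<alpha> i (Y i) < Cf i"
    and sum_\<gamma>: "(\<Sum>k\<in>{1..L}. \<gamma> k) = 0" and supp_\<gamma>: "\<forall>k\<in>{1..L}. \<alpha> i k = 0 \<longrightarrow> \<gamma> k = 0"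
  shows "\<forall>\<^sub>F t in at 0. dual_feasible Y Cf N L (\<lambda>j l. \<alpha> j l + t * single_row i \<gamma> j l)"
proof -
  have "\<forall>\<^sub>F t in at 0. \<forall>l\<in>{1..L}.
      (l = Y i \<longrightarrow> \<alpha> i l + t * \<gamma> l \<le> Cf i) \<and> (l \<noteq> Y i \<longrightarrow> \<alpha> i l + t * \<gamma> l \<le> 0)"
  proof (intro eventually_ball_finite ballI finite_atLeastAtMost)
    fix l assume l: "l \<in> {1..L}"
    show "\<forall>\<^sub>F t in at 0. (l = Y i \<longrightarrow> \<alpha> i l + t * \<gamma> l \<le> Cf i) \<and> (l \<noteq> Y i \<longrightarrow> \<alpha> i l + t * \<gamma> l \<le> 0)"
    proof (cases "l = Y i")
      case True
      then show ?thesis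
        using eventually_add_scaled_le[of "\<alpha> i l" "Cf i" "\<gamma> l"] slack by simp
    next
      case False
      then have "\<alpha> i l \<le> 0"
        using feas i l unfolding dual_feasible_def by blast
      then have "\<alpha> i l < 0 \<or> \<alpha> i l \<le> 0 \<and> \<gamma> l = 0"
        using supp_\<gamma> l by force
      then show ?thesis
        using eventually_add_scaled_le[of "\<alpha> i l" 0 "\<gamma> l"] False by simp
    qed
  qed
  then show ?thesis
  proof (rule eventually_mono)
    fix t :: real
    assume row: "\<forall>l\<in>{1..L}. (l = Y i \<longrightarrow> \<alpha> i l + t * \<gamma> l \<le> Cf i) \<and> (l \<noteq> Y i \<longrightarrow> \<alpha> i l + t * \<gamma> l \<le> 0)"
    have row_sum: "(\<Sum>l\<in>{1..L}. \<alpha> i l + t * \<gamma> l) = 0"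
      using feas i sum_\<gamma> unfolding dual_feasible_def by (simp add: sum.distrib flip: sum_distrib_left)
    show "dual_feasible Y Cf N L (\<lambda>j l. \<alpha> j l + t * single_row i \<gamma> j l)"
      unfolding dual_feasible_def
    proof
      fix j assume j: "j \<in> {1..N}"
      show "(\<Sum>l\<in>{1..L}. \<alpha> j l + t * single_row i \<gamma> j l) = 0 \<and>
        (\<forall>l\<in>{1..L}. (l = Y j \<longrightarrow> \<alpha> j l + t * single_row i \<gamma> j l \<le> Cf j) \<and>
          (l \<noteq> Y j \<longrightarrow> \<alpha> j l + t * single_row i \<gamma> j l \<le> 0))"
        using feas j row row_sum unfolding dual_feasible_def single_row_def
        by (cases "j = i") simp_all
    qed
  qed
qed

lemma optimal_dual_stationary_row:
  assumes sym: "\<forall>x y. K x y = K y x"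
    and feas: "dual_feasible Y Cf N L \<alpha>"
    and opt: "\<forall>\<beta>. dual_feasible Y Cf N L \<beta> \<longrightarrow> dual_obj K X E N L \<beta> \<le> dual_obj K X E N L \<alpha>"
    and i: "i \<in> {1..N}" and slack: "\<alpha> i (Y i) < Cf i"
    and sum_\<gamma>: "(\<Sum>k\<in>{1..L}. \<gamma> k) = 0" and supp_\<gamma>: "\<forall>k\<in>{1..L}. \<alpha> i k = 0 \<longrightarrow> \<gamma> k = 0"
  shows "(\<Sum>k\<in>{1..L}. \<gamma> k * grad K X E N \<alpha> i k) = 0"
proof -
  let ?S = "\<Sum>k\<in>{1..L}. \<gamma> k * grad K X E N \<alpha> i k"
  let ?Q = "\<Sum>k\<in>{1..L}. (\<gamma> k)\<^sup>2 * K (X i) (X i)"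
  have "\<forall>\<^sub>F t in at 0. t * - ?S + t\<^sup>2 * - (?Q / 2) \<le> 0"
    using dual_feasible_add_single_row[OF feas i slack sum_\<gamma> supp_\<gamma>]
  proof (rule eventually_mono)
    fix t :: real
    assume "dual_feasible Y Cf N L (\<lambda>j l. \<alpha> j l + t * single_row i \<gamma> j l)"
    then have "dual_obj K X E N L (\<lambda>j l. \<alpha> j l + t * single_row i \<gamma> j l) \<le> dual_obj K X E N L \<alpha>"
      using opt by blast
    then show "t * - ?S + t\<^sup>2 * - (?Q / 2) \<le> 0"
      unfolding dual_obj_add_single_row[OF sym i] by simp
  qed
  then show ?thesis
    using linear_coeff_eq_0_if_eventually_quadratic_nonpos by fastforce
qed

lemma sum_kdelta_diff:
  assumes "k \<in> {1..L}" and "y \<in> {1..L}"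
  shows "(\<Sum>l\<in>{1..L}. (kdelta k l - kdelta y l) * f l) = f k - f y"
proof -
  have "(\<Sum>l\<in>{1..L}. (kdelta k l - kdelta y l) * f l) =
      (\<Sum>l\<in>{1..L}. if k = l then f l else 0) - (\<Sum>l\<in>{1..L}. if y = l then f l else 0)"
  proof -
    have "(kdelta k l - kdelta y l) * f l = (if k = l then f l else 0) - (if y = l then f l else 0)" for l
      by (simp add: kdelta_def)
    then show ?thesis
      by (simp only: sum_subtractf)
  qed
  then show ?thesis
    using assms by simp
qed

lemma aug_y_mem_classes:
  assumes ys: "\<forall>i\<in>{1..n}. ys i \<in> {1..L}" and i: "i \<in> {1..n + m * L}"
  shows "aug_y n L ys i \<in> {1..L}"
proof (cases "i \<le> n")
  case True
  then show ?thesis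
    using ys i unfolding aug_y_def by auto
next
  case False
  then have "L > 0"
    using i by (cases "L = 0") auto
  then show ?thesis
    using False unfolding aug_y_def by (auto simp: Suc_le_eq)
qed

theorem lemmaA1:
  fixes K :: "'a \<Rightarrow> 'a \<Rightarrow> real"
    and xs xu :: "nat \<Rightarrow> 'a" and ys :: "nat \<Rightarrow> nat"
    and n m L N :: nat and C Cs \<Delta> :: real
    and \<alpha> :: "nat \<Rightarrow> nat \<Rightarrow> real" and i :: nat
  defines "X \<equiv> aug_x n L xs xu"
    and "Y \<equiv> aug_y n L ys"
    and "Cf \<equiv> aug_C n C Cs"
    and "E \<equiv> aug_e n L \<Delta> ys"
  assumes K: "psd_kernel K"
    and N: "N = n + m * L"
    and ys: "\<forall>i\<in>{1..n}. ys i \<in> {1..L}"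
    and C: "C > 0" and Cs: "Cs > 0" and \<Delta>: "\<Delta> \<ge> 0"
    and feas: "dual_feasible Y Cf N L \<alpha>"
    and opt: "\<forall>\<beta>. dual_feasible Y Cf N L \<beta> \<longrightarrow> dual_obj K X E N L \<beta> \<le> dual_obj K X E N L \<alpha>"
    and SV1: "i \<in> {1..N}" "0 < \<alpha> i (Y i)" "\<alpha> i (Y i) < Cf i"
  shows "(\<Sum>k\<in>{1..L}. \<alpha> i k * grad K X E N \<alpha> i k) = 0 \<and>
    (\<forall>k\<in>{1..L}. k \<noteq> Y i \<and> \<alpha> i k < 0 \<longrightarrow>
           grad K X E N \<alpha> i k = grad K X E N \<alpha> i (Y i)) \<and>
    (\<forall>\<gamma>::nat \<Rightarrow> real. (\<Sum>k\<in>{1..L}. \<gamma> k) = 0 \<and> (\<forall>k\<in>{1..L}. \<alpha> i k = 0 \<longrightarrow> \<gamma> k = 0)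
           \<longrightarrow> (\<Sum>k\<in>{1..L}. \<gamma> k * grad K X E N \<alpha> i k) = 0)"
proof -
  have sym: "\<forall>x y. K x y = K y x"
    using K unfolding psd_kernel_def by blast
  have stationary: "(\<Sum>k\<in>{1..L}. \<gamma> k * grad K X E N \<alpha> i k) = 0"
    if "(\<Sum>k\<in>{1..L}. \<gamma> k) = 0" and "\<forall>k\<in>{1..L}. \<alpha> i k = 0 \<longrightarrow> \<gamma> k = 0" for \<gamma>
    using optimal_dual_stationary_row[OF sym feas opt SV1(1) SV1(3) that] .
  have "(\<Sum>k\<in>{1..L}. \<alpha> i k * grad K X E N \<alpha> i k) = 0"
    using feas SV1(1) unfolding dual_feasible_def by (intro stationary) auto
  moreover have "grad K X E N \<alpha> i k = grad K X E N \<alpha> i (Y i)"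
    if k: "k \<in> {1..L}" "k \<noteq> Y i" "\<alpha> i k < 0" for k
  proof -
    have Yi: "Y i \<in> {1..L}"
      using aug_y_mem_classes[OF ys] SV1(1) N unfolding Y_def by blast
    have "(\<Sum>l\<in>{1..L}. (kdelta k l - kdelta (Y i) l) * grad K X E N \<alpha> i l) = 0"
    proof (rule stationary)
      show "(\<Sum>l\<in>{1..L}. kdelta k l - kdelta (Y i) l) = 0"
        using sum_kdelta_diff[OF k(1) Yi, of "\<lambda>_. 1"] by simp
      show "\<forall>l\<in>{1..L}. \<alpha> i l = 0 \<longrightarrow> kdelta k l - kdelta (Y i) l = 0"
        using k(3) SV1(2) by (auto simp: kdelta_def)
    qed
    then show ?thesis
      using sum_kdelta_diff[OF k(1) Yi] by simp
  qed
  ultimately show ?thesis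
    using stationary by blast
qed

end
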